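(* Let $(X,d)$ be a $\delta$-hyperbolic geodesic metric space, $\delta\ge0$. Then for all $x,y\in X$ and $s,t\ge0$, the set $B(x,s)\cap B(y,t)$ has eccentricity at most $2\delta$; and if it is nonempty, there are $c\in X$, $r\ge 0$ with $d_H(B(x,s)\cap B(y,t),B(c,r))\le 2\delta$.
   Context: $B(x,r)=\{z\in X: d(x,z)\le r\}$ denotes the closed ball. A set $S\subseteq X$ has eccentricity at most $\delta$ if $S=\emptyset$ or there exist $R\ge 0$ and $c,c'\in X$ with $B(c,R)\subseteq S\subseteq B(c',R+\delta)$. $d_H$ is Hausdorff distance. A geodesic metric space is $\delta$-hyperbolic if for every geodesic triangle each side is contained in the $\delta$-neighbourhood of the union of the other two sides. *)

theory Defs
  imports "HOL-Analysis.Analysis"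
begin

definition geodesic_segment_between :: "'a::metric_space set \<Rightarrow> 'a \<Rightarrow> 'a \<Rightarrow> bool" where
  "geodesic_segment_between G x y \<longleftrightarrow>
     (\<exists>g :: real \<Rightarrow> 'a. g 0 = x \<and> g (dist x y) = y \<and>
        (\<forall>s\<in>{0..dist x y}. \<forall>t\<in>{0..dist x y}. dist (g s) (g t) = \<bar>s - t\<bar>) \<and>
        G = g ` {0..dist x y})"

definition geodesic_space :: "'a::metric_space itself \<Rightarrow> bool" where
  "geodesic_space _ \<longleftrightarrow> (\<forall>x y::'a. \<exists>G. geodesic_segment_between G x y)"

definition delta_hyperbolic :: "'a::metric_space itself \<Rightarrow> real \<Rightarrow> bool" where
  "delta_hyperbolic _ \<delta> \<longleftrightarrow>
     (\<forall>(x::'a) y z Gxy Gyz Gxz.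
        geodesic_segment_between Gxy x y \<and> geodesic_segment_between Gyz y z \<and>
        geodesic_segment_between Gxz x z \<longrightarrow>
        (\<forall>p\<in>Gxy. \<exists>q\<in>Gyz \<union> Gxz. dist p q \<le> \<delta>) \<and>
        (\<forall>p\<in>Gyz. \<exists>q\<in>Gxy \<union> Gxz. dist p q \<le> \<delta>) \<and>
        (\<forall>p\<in>Gxz. \<exists>q\<in>Gxy \<union> Gyz. dist p q \<le> \<delta>))"

definition eccentricity_le :: "'a::metric_space set \<Rightarrow> real \<Rightarrow> bool" where
  "eccentricity_le S \<delta> \<longleftrightarrow>
     S = {} \<or> (\<exists>R c c'. R \<ge> 0 \<and> cball c R \<subseteq> S \<and> S \<subseteq> cball c' (R + \<delta>))"

text \<open>Hausdorff distance (used for nonempty bounded sets).\<close>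
definition hausdorff_dist :: "'a::metric_space set \<Rightarrow> 'a set \<Rightarrow> real" where
  "hausdorff_dist A B = max (SUP a\<in>A. infdist a B) (SUP b\<in>B. infdist b A)"

end

theory Submission
  imports Defs
begin

text \<open>
  If the balls are nested, their intersection is the smaller ball. Otherwise
  \<open>|s - t| \<le> d(x,y) \<le> s + t\<close>, and the point \<open>c\<close> of a geodesic from \<open>x\<close> to \<open>y\<close>
  with \<open>d(x,c) = s - R\<close>, \<open>d(c,y) = t - R\<close>, where \<open>R = (s + t - d(x,y))/2\<close>, is the
  centre: \<open>B(c,R)\<close> lies in both balls by the triangle inequality, and thinness
  of the triangle \<open>x y z\<close> at \<open>c\<close> gives \<open>d(c,z) \<le> R + 2\<delta>\<close> for every point \<open>z\<close>
  of the intersection. In a geodesic space, \<open>B(c,R) \<subseteq> S \<subseteq> B(c,R + 2\<delta>)\<close>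
  forces the Hausdorff distance from \<open>S\<close> to \<open>B(c,R)\<close> to be at most \<open>2\<delta>\<close>.
\<close>

lemma cball_subset_cball_dist:
  fixes x y :: "'a::metric_space"
  assumes "dist x y + r \<le> s"
  shows "cball y r \<subseteq> cball x s"
proof
  fix z
  assume "z \<in> cball y r"
  then show "z \<in> cball x s"
    using assms dist_triangle[of x z y] by (simp add: mem_cball)
qed

lemma geodesic_segment_between_dist_sum:
  assumes "geodesic_segment_between G x y" "q \<in> G"
  shows "dist x q + dist q y = dist x y"
proof -
  obtain g where g: "g 0 = x" "g (dist x y) = y"
    "\<forall>s\<in>{0..dist x y}. \<forall>t\<in>{0..dist x y}. dist (g s) (g t) = \<bar>s - t\<bar>"
    "G = g ` {0..dist x y}"
    using assms(1) unfolding geodesic_segment_between_def by blast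
  then obtain u where u: "u \<in> {0..dist x y}" "q = g u"
    using assms(2) by blast
  have "dist x q = u"
    using g(1) g(3)[rule_format, of 0 u] u by auto
  moreover have "dist q y = dist x y - u"
    using g(2) g(3)[rule_format, of u "dist x y"] u by auto
  ultimately show ?thesis
    by simp
qed

lemma geodesic_segment_between_point_at_dist:
  assumes "geodesic_segment_between G x y" "0 \<le> a" "a \<le> dist x y"
  obtains p where "p \<in> G" "dist x p = a" "dist p y = dist x y - a"
proof -
  obtain g where g: "g 0 = x" "g (dist x y) = y"
    "\<forall>s\<in>{0..dist x y}. \<forall>t\<in>{0..dist x y}. dist (g s) (g t) = \<bar>s - t\<bar>"
    "G = g ` {0..dist x y}"
    using assms(1) unfolding geodesic_segment_between_def by blast
  have "g a \<in> G"
    using g(4) assms(2,3) by auto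
  moreover have "dist x (g a) = a"
    using g(1) g(3)[rule_format, of 0 a] assms(2,3) by auto
  moreover have "dist (g a) y = dist x y - a"
    using g(2) g(3)[rule_format, of a "dist x y"] assms(2,3) by auto
  ultimately show ?thesis
    using that by blast
qed

lemma geodesic_space_segment:
  assumes "geodesic_space TYPE('a::metric_space)"
  obtains G where "geodesic_segment_between G (x::'a) y"
  using assms unfolding geodesic_space_def by blast

lemma infdist_cball_le_geodesic:
  fixes c z :: "'a::metric_space"
  assumes "geodesic_space TYPE('a)" "R \<ge> 0"
  shows "infdist z (cball c R) \<le> max 0 (dist c z - R)"
proof (cases "dist c z \<le> R")
  case True
  then show ?thesis
    by simp
next
  case False
  obtain G where "geodesic_segment_between G c z"
    using assms(1) by (rule geodesic_space_segment)
  then obtain p where p: "dist c p = R" "dist p z = dist c z - R"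
    using False assms(2) by (elim geodesic_segment_between_point_at_dist) auto
  then have "infdist z (cball c R) \<le> dist z p"
    by (intro infdist_le) simp
  then show ?thesis
    using p(2) by (simp add: dist_commute)
qed

lemma hausdorff_dist_cball_le:
  fixes S :: "'a::metric_space set"
  assumes "geodesic_space TYPE('a)" "R \<ge> 0" "e \<ge> 0"
    and inner: "cball c R \<subseteq> S" and outer: "S \<subseteq> cball c (R + e)"
  shows "hausdorff_dist S (cball c R) \<le> e"
proof -
  have "S \<noteq> {}"
    using inner assms(2) by (metis centre_in_cball empty_iff subsetD)
  moreover have "infdist z (cball c R) \<le> e" if "z \<in> S" for z
    using infdist_cball_le_geodesic[OF assms(1,2), of z c] outer that assms(3)
    by (auto simp: mem_cball)
  ultimately have "(SUP z\<in>S. infdist z (cball c R)) \<le> e"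
    by (rule cSUP_least)
  moreover have "(SUP b\<in>cball c R. infdist b S) \<le> e"
    using assms(2,3) inner by (intro cSUP_least) auto
  ultimately show ?thesis
    unfolding hausdorff_dist_def by simp
qed

lemma dist_le_via_point_near_geodesic:
  assumes "geodesic_segment_between G x z" "q \<in> G" "dist c q \<le> \<delta>"
  shows "dist c z \<le> dist x z - dist x c + 2 * \<delta>"
proof -
  have "dist x q + dist q z = dist x z"
    using assms(1,2) by (rule geodesic_segment_between_dist_sum)
  moreover have "dist x c \<le> dist x q + dist q c" "dist c z \<le> dist c q + dist q z"
    by (rule dist_triangle)+
  ultimately show ?thesis
    using assms(3) by (simp add: dist_commute)
qed

lemma delta_hyperbolic_dist_from_geodesic_le:
  fixes x y z :: "'a::metric_space"
  assumes "geodesic_space TYPE('a)" "delta_hyperbolic TYPE('a) \<delta>"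
    and G: "geodesic_segment_between G x y" and "c \<in> G"
  shows "dist c z \<le> max (dist x z - dist x c) (dist y z - dist y c) + 2 * \<delta>"
proof -
  obtain Gxz Gyz where Gxz: "geodesic_segment_between Gxz x z"
    and Gyz: "geodesic_segment_between Gyz y z"
    using assms(1) by (meson geodesic_space_segment)
  then obtain q where q: "q \<in> Gyz \<union> Gxz" "dist c q \<le> \<delta>"
    using assms(2) G \<open>c \<in> G\<close> unfolding delta_hyperbolic_def by blast
  then consider "q \<in> Gxz" | "q \<in> Gyz"
    by blast
  then show ?thesis
  proof cases
    case 1
    then show ?thesis
      using dist_le_via_point_near_geodesic[OF Gxz 1 q(2)] by linarith
  next
    case 2
    then show ?thesis
      using dist_le_via_point_near_geodesic[OF Gyz 2 q(2)] by linarith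
  qed
qed

lemma cball_inter_cball_between_cballs:
  fixes x y :: "'a::metric_space"
  assumes geo: "geodesic_space TYPE('a)" and hyp: "delta_hyperbolic TYPE('a) \<delta>"
    and "\<delta> \<ge> 0" "s \<ge> 0" "t \<ge> 0" and nonempty: "cball x s \<inter> cball y t \<noteq> {}"
  obtains c R where "R \<ge> 0" "cball c R \<subseteq> cball x s \<inter> cball y t"
    "cball x s \<inter> cball y t \<subseteq> cball c (R + 2 * \<delta>)"
proof -
  let ?S = "cball x s \<inter> cball y t"
  define D where "D = dist x y"
  obtain w where "w \<in> ?S"
    using nonempty by blast
  then have "D \<le> s + t"
    using dist_triangle[of x y w] unfolding D_def by (simp add: dist_commute)
  consider "D + t \<le> s" | "D + s \<le> t" | "s \<le> D + t" "t \<le> D + s"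
    by linarith
  then show ?thesis
  proof cases
    case 1
    then have "?S = cball y t"
      using cball_subset_cball_dist[of x y t s] unfolding D_def by auto
    then show ?thesis
      using that[of t y] \<open>t \<ge> 0\<close> \<open>\<delta> \<ge> 0\<close> by (simp add: subset_cball)
  next
    case 2
    then have "?S = cball x s"
      using cball_subset_cball_dist[of y x s t] unfolding D_def by (auto simp: dist_commute)
    then show ?thesis
      using that[of s x] \<open>s \<ge> 0\<close> \<open>\<delta> \<ge> 0\<close> by (simp add: subset_cball)
  next
    case 3
    define R where "R = (s + t - D) / 2"
    obtain G where G: "geodesic_segment_between G x y"
      using geo by (rule geodesic_space_segment)
    have "0 \<le> s - R" "s - R \<le> dist x y"
      using 3 \<open>D \<le> s + t\<close> unfolding R_def D_def by (simp_all add: field_simps)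
    then obtain c where "c \<in> G" "dist x c = s - R" "dist c y = dist x y - (s - R)"
      by (rule geodesic_segment_between_point_at_dist[OF G])
    then have c: "c \<in> G" "dist x c = s - R" "dist c y = t - R"
      by (simp_all add: R_def D_def field_simps)
    have "R \<ge> 0"
      using \<open>D \<le> s + t\<close> by (simp add: R_def)
    moreover have "cball c R \<subseteq> ?S"
      using cball_subset_cball_dist[of x c R s] cball_subset_cball_dist[of y c R t] c
      by (simp add: dist_commute)
    moreover have "?S \<subseteq> cball c (R + 2 * \<delta>)"
    proof
      fix z
      assume "z \<in> ?S"
      then show "z \<in> cball c (R + 2 * \<delta>)"
        using delta_hyperbolic_dist_from_geodesic_le[OF geo hyp G c(1), of z] c
        by (simp add: dist_commute max_def split: if_splits)
    qed
    ultimately show ?thesis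
      by (rule that)
  qed
qed

theorem proposition3p2:
  fixes \<delta> :: real
  assumes "geodesic_space TYPE('a::metric_space)"
    and "delta_hyperbolic TYPE('a) \<delta>"
    and "\<delta> \<ge> 0"
  shows "\<forall>(x::'a) y s t. s \<ge> 0 \<and> t \<ge> 0 \<longrightarrow>
           eccentricity_le (cball x s \<inter> cball y t) (2 * \<delta>) \<and>
           (cball x s \<inter> cball y t \<noteq> {} \<longrightarrow>
              (\<exists>c r. r \<ge> 0 \<and> hausdorff_dist (cball x s \<inter> cball y t) (cball c r) \<le> 2 * \<delta>))"
proof (intro allI impI)
  fix x y :: 'a and s t :: real
  assume "s \<ge> 0 \<and> t \<ge> 0"
  let ?S = "cball x s \<inter> cball y t"
  show "eccentricity_le ?S (2 * \<delta>) \<and>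
    (?S \<noteq> {} \<longrightarrow> (\<exists>c r. r \<ge> 0 \<and> hausdorff_dist ?S (cball c r) \<le> 2 * \<delta>))"
  proof (cases "?S = {}")
    case True
    then show ?thesis
      unfolding eccentricity_le_def by simp
  next
    case False
    obtain c R where R: "R \<ge> 0" "cball c R \<subseteq> ?S" "?S \<subseteq> cball c (R + 2 * \<delta>)"
      using cball_inter_cball_between_cballs assms \<open>s \<ge> 0 \<and> t \<ge> 0\<close> False by metis
    then have "hausdorff_dist ?S (cball c R) \<le> 2 * \<delta>"
      using assms(1,3) by (intro hausdorff_dist_cball_le) simp_all
    then show ?thesis
      using R unfolding eccentricity_le_def by blast
  qed
qed

end
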